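(* Let $\partial D$ be a closed $C^2$ curve in $\mathbb{R}^2$ and let $\mathbf{C}=(C_{ij})_{i,j=1}^3$ be the constant matrix described in the context. Then $\mathbf{C}$ is symmetric.
   Context: Lamé constants $\lambda,\mu$; $\boldsymbol\Gamma(\mathbf{x})=\alpha_1\ln|\mathbf{x}|\mathbf{I}_2-\alpha_2\frac{\mathbf{x}\mathbf{x}^T}{|\mathbf{x}|^2}$, $\alpha_1=\frac1{4\pi}(\frac1\mu+\frac1{2\mu+\lambda})$, $\alpha_2=\frac1{4\pi}(\frac1\mu-\frac1{2\mu+\lambda})$. $\mathbf{S}_{\partial D}[\boldsymbol\varphi](\mathbf{x})=\int_{\partial D}\boldsymbol\Gamma(\mathbf{x}-\mathbf{y})\boldsymbol\varphi(\mathbf{y})ds(\mathbf{y})$; $\mathbf{K}^*_{\partial D}[\boldsymbol\varphi](\mathbf{x})=\mathrm{p.v.}\int_{\partial D}\partial_{\boldsymbol\nu_{\mathbf{x}}}\boldsymbol\Gamma(\mathbf{x}-\mathbf{y})\boldsymbol\varphi(\mathbf{y})ds(\mathbf{y})$ with conormal derivative $\partial_{\boldsymbol\nu}\mathbf{u}=\lambda(\nabla\cdot\mathbf{u})\boldsymbol\nu+\mu(\nabla\mathbf{u}+\nabla\mathbf{u}^T)\boldsymbol\nu$. Let $\boldsymbol\xi_1=(1,0)^T$, $\boldsymbol\xi_2=(0,1)^T$, $\boldsymbol\xi_3=(x_2,-x_1)^T$, $\mathbf{F}=(\boldsymbol\xi_1,\boldsymbol\xi_2,\boldsymbol\xi_3)$.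 It is known that there is a unique $\mathbf{G}=(\boldsymbol\zeta_1,\boldsymbol\zeta_2,\boldsymbol\zeta_3)$, whose columns form a basis of $\ker(-\frac12\mathbf{I}_2+\mathbf{K}^*_{\partial D})$, and a unique constant $3\times3$ matrix $\mathbf{C}$ such that $\mathbf{S}_{\partial D}[\mathbf{G}]=\mathbf{F}\mathbf{C}$ on $\partial D$ and $\int_{\partial D}\mathbf{F}(\mathbf{y})^T\mathbf{G}(\mathbf{y})ds(\mathbf{y})=\mathbf{I}_3$. *)

theory Defs
  imports "HOL-Complex_Analysis.Complex_Analysis"
begin

text \<open>Points and vectors of the plane are represented as complex numbers
  (x1, x2) = x1 + i x2; the Euclidean inner product is the real inner product on complex.\<close>

definition alpha1 :: "real \<Rightarrow> real \<Rightarrow> real" where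
  "alpha1 lam mu = (1 / (4 * pi)) * (1 / mu + 1 / (2 * mu + lam))"

definition alpha2 :: "real \<Rightarrow> real \<Rightarrow> real" where
  "alpha2 lam mu = (1 / (4 * pi)) * (1 / mu - 1 / (2 * mu + lam))"

text \<open>Kelvin matrix applied to a vector v:
  Gamma(x) v = alpha1 ln|x| v - alpha2 (x x^T / |x|^2) v.\<close>
definition Gam :: "real \<Rightarrow> real \<Rightarrow> complex \<Rightarrow> complex \<Rightarrow> complex" where
  "Gam lam mu x v = (alpha1 lam mu * ln (norm x)) *\<^sub>R v
                    - (alpha2 lam mu * ((x \<bullet> v) / (norm x)^2)) *\<^sub>R x"

text \<open>Conormal derivative
  lam (div u) n + mu (grad u + grad u^T) n  of a vector field u at x, with D the Jacobian.\<close>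
definition conormal :: "real \<Rightarrow> real \<Rightarrow> (complex \<Rightarrow> complex) \<Rightarrow> complex \<Rightarrow> complex \<Rightarrow> complex" where
  "conormal lam mu u x n =
     (let D = frechet_derivative u (at x);
          dv = Re (D 1) + Im (D \<i>)
      in (lam * dv) *\<^sub>R n + mu *\<^sub>R (D n + (complex_of_real (D 1 \<bullet> n) + complex_of_real (D \<i> \<bullet> n) * \<i>)))"

text \<open>A closed C^2 regular simple curve, parametrized 1-periodically, positively oriented
  (counterclockwise, so that the rotated tangent below is the outward normal).\<close>
definition C2_closed_curve :: "(real \<Rightarrow> complex) \<Rightarrow> bool" where
  "C2_closed_curve g \<longleftrightarrow>
     (\<forall>t. g (t + 1) = g t) \<and>
     (\<forall>t. g differentiable (at t)) \<and>
     (\<forall>t. (\<lambda>s. vector_derivative g (at s)) differentiable (at t)) \<and>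
     continuous_on UNIV (\<lambda>t. vector_derivative (\<lambda>s. vector_derivative g (at s)) (at t)) \<and>
     (\<forall>t. vector_derivative g (at t) \<noteq> 0) \<and>
     simple_path g \<and>
     (\<exists>z. z \<notin> path_image g \<and> winding_number g z = 1)"

definition speed :: "(real \<Rightarrow> complex) \<Rightarrow> real \<Rightarrow> real" where
  "speed g t = norm (vector_derivative g (at t))"

text \<open>Outward unit normal at g t (tangent rotated clockwise).\<close>
definition nu :: "(real \<Rightarrow> complex) \<Rightarrow> real \<Rightarrow> complex" where
  "nu g t = - \<i> * vector_derivative g (at t) / complex_of_real (speed g t)"

definition single_layer :: "real \<Rightarrow> real \<Rightarrow> (real \<Rightarrow> complex) \<Rightarrow> (complex \<Rightarrow> complex) \<Rightarrow> complex \<Rightarrow> complex" where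
  "single_layer lam mu g phi x =
     integral {0..1} (\<lambda>s. speed g s *\<^sub>R Gam lam mu (x - g s) (phi (g s)))"

text \<open>phi lies in the kernel of -1/2 I + K*: phi is continuous on the boundary and for every
  boundary point x = g t, the principal value integral
  p.v. int d_{nu_x} Gamma(x-y) phi(y) ds(y) exists and equals phi(x)/2.\<close>
definition in_kernel :: "real \<Rightarrow> real \<Rightarrow> (real \<Rightarrow> complex) \<Rightarrow> (complex \<Rightarrow> complex) \<Rightarrow> bool" where
  "in_kernel lam mu g phi \<longleftrightarrow>
     continuous_on (path_image g) phi \<and>
     (\<forall>t\<in>{0..1}.
        ((\<lambda>\<epsilon>. integral {s\<in>{0..1}. \<epsilon> \<le> norm (g s - g t)}
              (\<lambda>s. speed g s *\<^sub>R
                     conormal lam mu (\<lambda>x. Gam lam mu (x - g s) (phi (g s))) (g t) (nu g t)))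
          \<longlongrightarrow> phi (g t) / 2) (at_right 0))"

text \<open>xi_1 = (1,0), xi_2 = (0,1), xi_3 = (x2, -x1).\<close>
definition xi :: "3 \<Rightarrow> complex \<Rightarrow> complex" where
  "xi i x = (if i = 1 then 1 else if i = 2 then \<i> else - \<i> * x)"

end

theory Submission
  imports Defs "HOL-Real_Asymp.Real_Asymp"
begin

text \<open>Pairing the normalization with \<zeta>_i gives C_ij = int_{boundary} \<zeta>_i . S[\<zeta>_j] ds, the double
  integral of \<zeta>_i(x) . Gamma(x - y) \<zeta>_j(y). Since Gamma(x) is a symmetric matrix and an even
  function of x, exchanging the order of integration turns this into C_ji. Fubini's theorem
  applies because the kernel has only a logarithmic singularity: on a regular simple closed
  curve, |g s - g t| is bounded below by a multiple of the distance of s and t in R/Z.\<close>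

section \<open>Integrability of the logarithmic singularity\<close>

lemma has_integral_neg_ln_01: "((\<lambda>u::real. - ln u) has_integral 1) {0..1}"
proof -
  define F where "F u = u - u * ln u" for u :: real
  have "continuous_on {0..1} F"
    unfolding continuous_on_def
  proof
    fix x :: real assume x: "x \<in> {0..1}"
    show "(F \<longlongrightarrow> F x) (at x within {0..1})"
    proof (cases "x = 0")
      case True
      have "(F \<longlongrightarrow> F 0) (at_right 0)"
        unfolding F_def by simp real_asymp
      then show ?thesis using True by (simp add: at_within_Icc_at_right)
    next
      case False
      with x have "isCont F x" unfolding F_def by (intro continuous_intros) auto
      then show ?thesis by (simp add: continuous_at_imp_continuous_within flip: continuous_within)
    qed
  qed
  moreover have "(F has_vector_derivative - ln u) (at u)" if "u \<in> {0<..<1}" for u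
  proof -
    have "(F has_real_derivative (1 - (1 * ln u + u * (1/u)))) (at u)"
      unfolding F_def using that by (intro derivative_eq_intros) auto
    then show ?thesis using that by (simp add: has_real_derivative_iff_has_vector_derivative)
  qed
  ultimately have "((\<lambda>u. - ln u) has_integral F 1 - F 0) {0..1}"
    by (intro fundamental_theorem_of_calculus_interior) auto
  then show ?thesis by (simp add: F_def)
qed

lemma integrable_neg_ln_01: "integrable lborel (\<lambda>u::real. indicator {0<..1} u * - ln u)"
proof -
  have "((\<lambda>u::real. if u \<in> {0..1} then - ln u else 0) has_integral 1) UNIV"
    using has_integral_neg_ln_01 by (simp only: has_integral_restrict_UNIV)
  then have "((\<lambda>u::real. indicator {0<..1} u * - ln u) has_integral 1) UNIV"
    by (rule has_integral_spike[where S="{0}", rotated 2]) (auto simp: indicator_def)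
  then have "integral\<^sup>N lborel (\<lambda>u::real. indicator {0<..1} u * - ln u) = ennreal 1"
    by (intro nn_integral_has_integral_lborel) (auto simp: indicator_def)
  then show ?thesis
    by (intro integrableI_nn_integral_finite) (auto simp: indicator_def)
qed

definition log_sing :: "real \<Rightarrow> real" where
  "log_sing u = indicator {-1..1} u * \<bar>ln \<bar>u\<bar>\<bar>"

lemma log_sing_nonneg: "0 \<le> log_sing u"
  by (simp add: log_sing_def)

lemma borel_measurable_log_sing [measurable]: "log_sing \<in> borel_measurable borel"
  unfolding log_sing_def by measurable

lemma integrable_log_sing: "integrable lborel log_sing"
proof -
  let ?f = "\<lambda>u::real. indicator {0<..1} u * - ln u"
  have "integrable lborel (\<lambda>u. ?f u + ?f (0 + (-1) * u))"
    using integrable_neg_ln_01 lborel_integrable_real_affine[OF integrable_neg_ln_01, of "-1" 0]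
    by simp
  moreover have "?f u + ?f (0 + (-1) * u) = log_sing u" for u
    by (auto simp: log_sing_def indicator_def abs_if)
  ultimately show ?thesis by simp
qed

text \<open>For s, t in [0,1], ln |g s - g t| is singular where s - t is -1, 0 or 1 (the diagonal
  of the torus R/Z x R/Z); one logarithmic term for each.\<close>
definition periodic_log_sing :: "real \<Rightarrow> real" where
  "periodic_log_sing d = log_sing (d - 1) + log_sing d + log_sing (d + 1)"

lemma periodic_log_sing_nonneg: "0 \<le> periodic_log_sing d"
  by (simp add: periodic_log_sing_def log_sing_nonneg)

lemma borel_measurable_periodic_log_sing [measurable]:
  "periodic_log_sing \<in> borel_measurable borel"
  unfolding periodic_log_sing_def by measurable

lemma integrable_periodic_log_sing: "integrable lborel periodic_log_sing"
proof -
  have "integrable lborel (\<lambda>d. log_sing (c + 1 * d))" for c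
    by (rule lborel_integrable_real_affine[OF integrable_log_sing]) simp
  from this[of "-1"] this[of 0] this[of 1] show ?thesis
    unfolding periodic_log_sing_def by (simp add: add.commute)
qed

lemma Gam_scaleR: "Gam lam mu x (c *\<^sub>R v) = c *\<^sub>R Gam lam mu x v"
  unfolding Gam_def by (simp add: algebra_simps inner_scaleR_right)

lemma Gam_zero [simp]: "Gam lam mu x 0 = 0"
  unfolding Gam_def by simp

lemma Gam_minus: "Gam lam mu (- x) v = Gam lam mu x v"
  unfolding Gam_def by simp

lemma Gam_minus_commute: "Gam lam mu (p - q) v = Gam lam mu (q - p) v"
  using Gam_minus[of lam mu "q - p" v] by simp

lemma inner_Gam_commute: "u \<bullet> Gam lam mu x v = v \<bullet> Gam lam mu x u"
  unfolding Gam_def by (simp add: inner_diff_right inner_scaleR_right inner_commute mult_ac)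

lemma borel_measurable_Gam [measurable (raw)]:
  assumes [measurable]: "f \<in> borel_measurable M" "h \<in> borel_measurable M"
  shows "(\<lambda>y. Gam lam mu (f y) (h y)) \<in> borel_measurable M"
  unfolding Gam_def power2_eq_square by measurable

lemma norm_Gam_le:
  "norm (Gam lam mu x v) \<le> (\<bar>alpha1 lam mu\<bar> * \<bar>ln (norm x)\<bar> + \<bar>alpha2 lam mu\<bar>) * norm v"
proof -
  have proj: "norm (((x \<bullet> v) / (norm x)^2) *\<^sub>R x) \<le> norm v"
  proof (cases "x = 0")
    case False
    then have "norm (((x \<bullet> v) / (norm x)^2) *\<^sub>R x) = \<bar>x \<bullet> v\<bar> / norm x"
      by (simp add: power2_eq_square)
    also have "\<dots> \<le> norm v"
      using Cauchy_Schwarz_ineq2[of x v] False by (simp add: divide_le_eq mult.commute)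
    finally show ?thesis .
  qed simp
  have "norm (Gam lam mu x v) \<le> norm ((alpha1 lam mu * ln (norm x)) *\<^sub>R v)
      + norm ((alpha2 lam mu * ((x \<bullet> v) / (norm x)^2)) *\<^sub>R x)"
    unfolding Gam_def by (rule norm_triangle_ineq4)
  also have "\<dots> = \<bar>alpha1 lam mu\<bar> * \<bar>ln (norm x)\<bar> * norm v
      + \<bar>alpha2 lam mu\<bar> * norm (((x \<bullet> v) / (norm x)^2) *\<^sub>R x)"
    by (simp only: norm_scaleR abs_mult mult.assoc)
  also have "\<dots> \<le> \<bar>alpha1 lam mu\<bar> * \<bar>ln (norm x)\<bar> * norm v + \<bar>alpha2 lam mu\<bar> * norm v"
    by (intro add_left_mono mult_left_mono proj) simp
  finally show ?thesis by (simp add: distrib_right)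
qed

section \<open>Chord estimates on a regular simple closed curve\<close>

lemma speed_nonneg [simp]: "0 \<le> speed g t"
  by (simp add: speed_def)

lemma C2_closed_curveD:
  assumes "C2_closed_curve g"
  shows "g (t + 1) = g t"
    and "(g has_vector_derivative vector_derivative g (at t)) (at t)"
    and "vector_derivative g (at t) \<noteq> 0"
    and "continuous_on UNIV g"
    and "continuous_on UNIV (\<lambda>t. vector_derivative g (at t))"
    and "continuous_on UNIV (speed g)"
    and "simple_path g"
proof -
  show "g (t + 1) = g t" "vector_derivative g (at t) \<noteq> 0" "simple_path g"
    using assms unfolding C2_closed_curve_def by simp_all
  show "(g has_vector_derivative vector_derivative g (at t)) (at t)"
    using assms unfolding C2_closed_curve_def by (simp add: vector_derivative_works[symmetric])
  show "continuous_on UNIV g"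
    using assms unfolding C2_closed_curve_def
    by (simp add: continuous_at_imp_continuous_on differentiable_imp_continuous_within)
  show V: "continuous_on UNIV (\<lambda>t. vector_derivative g (at t))"
    using assms unfolding C2_closed_curve_def
    by (simp add: continuous_at_imp_continuous_on differentiable_imp_continuous_within)
  show "continuous_on UNIV (speed g)"
    unfolding speed_def using V by (intro continuous_intros)
qed

lemma chord_ge_of_derivative_near:
  fixes g :: "real \<Rightarrow> 'a::banach"
  assumes "x \<le> y"
    and der: "\<And>z. z \<in> {x..y} \<Longrightarrow> (g has_vector_derivative g' z) (at z)"
    and osc: "\<And>z. z \<in> {x..y} \<Longrightarrow> norm (g' z - g' x) \<le> m"
    and big: "2 * m \<le> norm (g' x)"
  shows "m * (y - x) \<le> norm (g y - g x)"
proof -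
  have "(g' has_integral (g y - g x)) {x..y}"
    using \<open>x \<le> y\<close> der by (intro fundamental_theorem_of_calculus) (auto intro: has_vector_derivative_at_within)
  then have "((\<lambda>z. g' z - g' x) has_integral (g y - g x - (y - x) *\<^sub>R g' x)) {x..y}"
    using has_integral_const_real[of "g' x" x y] \<open>x \<le> y\<close> by (auto dest: has_integral_diff)
  moreover have "0 \<le> m"
    using osc[of x] \<open>x \<le> y\<close> by simp
  ultimately have "norm (g y - g x - (y - x) *\<^sub>R g' x) \<le> m * (y - x)"
    using has_integral_bound_real[of m "{}" "\<lambda>z. g' z - g' x" _ x y] osc \<open>x \<le> y\<close> by auto
  moreover have "2 * m * (y - x) \<le> norm ((y - x) *\<^sub>R g' x)"
    using big \<open>x \<le> y\<close> by (simp add: mult.commute mult_left_mono)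
  moreover have "norm ((y - x) *\<^sub>R g' x) \<le> norm (g y - g x) + norm (g y - g x - (y - x) *\<^sub>R g' x)"
    using norm_triangle_ineq4[of "g y - g x" "g y - g x - (y - x) *\<^sub>R g' x"] by simp
  ultimately show ?thesis by linarith
qed

lemma chord_ge_local:
  fixes g :: "real \<Rightarrow> 'a::banach"
  assumes der: "\<And>t. (g has_vector_derivative g' t) (at t)"
    and cont: "continuous_on {a..b} g'"
    and nz: "\<And>t. t \<in> {a..b} \<Longrightarrow> g' t \<noteq> 0"
  shows "\<exists>m>0. \<exists>r>0. \<forall>x\<in>{a..b}. \<forall>y\<in>{a..b}. \<bar>x - y\<bar> < r \<longrightarrow> m * \<bar>x - y\<bar> \<le> norm (g x - g y)"
proof (cases "a \<le> b")
  case True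
  have "continuous_on {a..b} (\<lambda>x. norm (g' x))"
    using cont by (intro continuous_intros)
  then obtain x0 where x0: "x0 \<in> {a..b}" "\<And>y. y \<in> {a..b} \<Longrightarrow> norm (g' x0) \<le> norm (g' y)"
    using continuous_attains_inf[OF compact_Icc] True by (metis atLeastatMost_empty_iff)
  define m where "m = norm (g' x0) / 2"
  have m: "m > 0" using nz[OF x0(1)] by (simp add: m_def)
  obtain r where r: "r > 0"
    and uc: "\<And>x y. x \<in> {a..b} \<Longrightarrow> y \<in> {a..b} \<Longrightarrow> dist y x < r \<Longrightarrow> dist (g' y) (g' x) < m"
    using compact_uniformly_continuous[OF cont] m unfolding uniformly_continuous_on_def by fastforce
  have near: "m * (y - x) \<le> norm (g y - g x)"
    if "x \<in> {a..b}" "y \<in> {a..b}" "x \<le> y" "y - x < r" for x y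
  proof (rule chord_ge_of_derivative_near[OF \<open>x \<le> y\<close> der])
    show "norm (g' z - g' x) \<le> m" if "z \<in> {x..y}" for z
      using uc[of x z] that \<open>x \<in> {a..b}\<close> \<open>y \<in> {a..b}\<close> \<open>y - x < r\<close>
      by (simp add: dist_norm norm_minus_commute less_imp_le)
    show "2 * m \<le> norm (g' x)"
      using x0(2)[OF \<open>x \<in> {a..b}\<close>] by (simp add: m_def)
  qed
  have "m * \<bar>x - y\<bar> \<le> norm (g x - g y)"
    if "x \<in> {a..b}" "y \<in> {a..b}" "\<bar>x - y\<bar> < r" for x y
    using near[of x y] near[of y x] that by (cases "x \<le> y") (auto simp: norm_minus_commute)
  with m r show ?thesis by blast
next
  case False
  then show ?thesis by (auto intro!: exI[of _ 1])
qed

lemma chord_ge_separated: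
  fixes g :: "real \<Rightarrow> 'a::real_normed_vector"
  assumes "simple_path g" and "0 < r"
  shows "\<exists>\<delta>>0. \<forall>s\<in>{0..1}. \<forall>t\<in>{0..1}. r \<le> \<bar>s - t\<bar> \<and> \<bar>s - t\<bar> \<le> 1 - r \<longrightarrow> \<delta> \<le> norm (g s - g t)"
proof -
  define P where "P = {p \<in> {0..1::real} \<times> {0..1}. r \<le> \<bar>fst p - snd p\<bar> \<and> \<bar>fst p - snd p\<bar> \<le> 1 - r}"
  define d where "d p = norm (g (fst p) - g (snd p))" for p
  have "\<exists>\<delta>>0. \<forall>p\<in>P. \<delta> \<le> d p"
  proof (cases "P = {}")
    case False
    have "closed P"
      unfolding P_def
      by (intro closed_Collect_conj closed_Times closed_Collect_le continuous_intros) (auto intro: closed_Times)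
    moreover have "bounded P"
      by (rule bounded_subset[of "{0..1} \<times> {0..1}"]) (auto simp: P_def intro: bounded_Times)
    ultimately have "compact P"
      by (simp add: compact_eq_bounded_closed)
    moreover have "continuous_on P d"
    proof -
      have "continuous_on {0..1} g"
        using \<open>simple_path g\<close> by (simp add: simple_path_def path_def)
      then have "continuous_on P (\<lambda>p. g (fst p))" "continuous_on P (\<lambda>p. g (snd p))"
        by (auto intro!: continuous_on_compose2[of "{0..1}" g] continuous_intros simp: P_def)
      then show ?thesis
        unfolding d_def by (intro continuous_intros)
    qed
    ultimately obtain p0 where p0: "p0 \<in> P" "\<And>p. p \<in> P \<Longrightarrow> d p0 \<le> d p"
      using continuous_attains_inf[of P d] False by blast
    have "fst p0 \<noteq> snd p0" "\<not> (fst p0 = 0 \<and> snd p0 = 1)" "\<not> (fst p0 = 1 \<and> snd p0 = 0)"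
      using p0(1) \<open>0 < r\<close> by (auto simp: P_def)
    moreover have "fst p0 \<in> {0..1}" "snd p0 \<in> {0..1}"
      using p0(1) by (auto simp: P_def)
    ultimately have "g (fst p0) \<noteq> g (snd p0)"
      using \<open>simple_path g\<close> unfolding simple_path_def loop_free_def by blast
    then show ?thesis using p0 by (intro exI[of _ "d p0"]) (auto simp: d_def)
  qed (use zero_less_one in blast)
  then show ?thesis by (auto simp: P_def d_def)
qed

lemma chord_ge_circle_dist:
  assumes curve: "C2_closed_curve g"
  shows "\<exists>c>0. \<forall>s\<in>{0..1}. \<forall>t\<in>{0..1}. c * min \<bar>s - t\<bar> (1 - \<bar>s - t\<bar>) \<le> norm (g s - g t)"
proof -
  obtain m r where m: "m > 0" and r: "r > 0"
    and near: "\<And>x y. x \<in> {0..2} \<Longrightarrow> y \<in> {0..2} \<Longrightarrow> \<bar>x - y\<bar> < r \<Longrightarrow> m * \<bar>x - y\<bar> \<le> norm (g x - g y)"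
    using chord_ge_local[OF C2_closed_curveD(2)[OF curve], of 0 2]
      continuous_on_subset[OF C2_closed_curveD(5)[OF curve]] C2_closed_curveD(3)[OF curve]
    by blast
  obtain \<delta> where \<delta>: "\<delta> > 0"
    and far: "\<And>s t. s \<in> {0..1} \<Longrightarrow> t \<in> {0..1} \<Longrightarrow> r \<le> \<bar>s - t\<bar> \<Longrightarrow> \<bar>s - t\<bar> \<le> 1 - r
                \<Longrightarrow> \<delta> \<le> norm (g s - g t)"
    using chord_ge_separated[OF C2_closed_curveD(7)[OF curve] r] by blast
  define c where "c = min m (2 * \<delta>)"
  have "c * min \<bar>s - t\<bar> (1 - \<bar>s - t\<bar>) \<le> norm (g s - g t)" if st: "s \<in> {0..1}" "t \<in> {0..1}" for s t
  proof -
    define d where "d = min \<bar>s - t\<bar> (1 - \<bar>s - t\<bar>)"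
    have d: "0 \<le> d" "d \<le> 1 / 2" using st by (auto simp: d_def min_def)
    have via_near: "c * d \<le> norm (g s - g t)"
      if "x \<in> {0..2}" "y \<in> {0..2}" "\<bar>x - y\<bar> < r" "d \<le> \<bar>x - y\<bar>" "g x - g y = g s - g t" for x y
    proof -
      have "c * d \<le> m * \<bar>x - y\<bar>"
        using that d m by (intro mult_mono) (auto simp: c_def)
      then show ?thesis using near[OF that(1-3)] that(5) by simp
    qed
    consider "\<bar>s - t\<bar> < r" | "t \<le> s" "1 - r < s - t" | "s \<le> t" "1 - r < t - s"
      | "r \<le> \<bar>s - t\<bar>" "\<bar>s - t\<bar> \<le> 1 - r"
      by linarith
    then have "c * d \<le> norm (g s - g t)"
    proof cases
      case 1
      then show ?thesis using st by (intro via_near[of s t]) (auto simp: d_def)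
    next
      case 2
      then show ?thesis using st C2_closed_curveD(1)[OF curve, of t]
        by (intro via_near[of s "t + 1"]) (auto simp: d_def)
    next
      case 3
      then show ?thesis using st C2_closed_curveD(1)[OF curve, of s]
        by (intro via_near[of "s + 1" t]) (auto simp: d_def)
    next
      case 4
      have "c * d \<le> 2 * \<delta> * (1 / 2)"
        using d \<delta> by (intro mult_mono) (auto simp: c_def)
      then show ?thesis using far[OF st 4] by simp
    qed
    then show ?thesis by (simp add: d_def)
  qed
  moreover have "c > 0" using m \<delta> by (simp add: c_def)
  ultimately show ?thesis by blast
qed

lemma neg_ln_circle_dist_le:
  assumes "\<bar>d\<bar> \<le> 1" and "0 < min \<bar>d\<bar> (1 - \<bar>d\<bar>)"
  shows "- ln (min \<bar>d\<bar> (1 - \<bar>d\<bar>)) \<le> periodic_log_sing d"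
proof -
  have le: "- ln (min \<bar>d\<bar> (1 - \<bar>d\<bar>)) \<le> periodic_log_sing d"
    if "min \<bar>d\<bar> (1 - \<bar>d\<bar>) = \<bar>e\<bar>" "\<bar>e\<bar> \<le> 1" "e \<in> {d - 1, d, d + 1}" for e
  proof -
    have "- ln (min \<bar>d\<bar> (1 - \<bar>d\<bar>)) \<le> log_sing e"
      using that(1,2) by (simp add: log_sing_def abs_le_iff)
    then show ?thesis
      using that(3) log_sing_nonneg[of "d - 1"] log_sing_nonneg[of d] log_sing_nonneg[of "d + 1"]
      unfolding periodic_log_sing_def by auto
  qed
  have "min \<bar>d\<bar> (1 - \<bar>d\<bar>) = \<bar>d\<bar>
      \<or> min \<bar>d\<bar> (1 - \<bar>d\<bar>) = \<bar>d - 1\<bar> \<and> \<bar>d - 1\<bar> \<le> 1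
      \<or> min \<bar>d\<bar> (1 - \<bar>d\<bar>) = \<bar>d + 1\<bar> \<and> \<bar>d + 1\<bar> \<le> 1"
    using assms(1) by (auto simp: min_def abs_if)
  then show ?thesis
    using le[of "d - 1"] le[of d] le[of "d + 1"] assms(1) by auto
qed

lemma abs_ln_chord_le:
  assumes curve: "C2_closed_curve g"
  shows "\<exists>M\<ge>0. \<forall>s\<in>{0..1}. \<forall>t\<in>{0..1}. \<bar>ln (norm (g s - g t))\<bar> \<le> M + periodic_log_sing (s - t)"
proof -
  obtain c where c: "c > 0"
    and chord: "\<And>s t. s \<in> {0..1} \<Longrightarrow> t \<in> {0..1} \<Longrightarrow> c * min \<bar>s - t\<bar> (1 - \<bar>s - t\<bar>) \<le> norm (g s - g t)"
    using chord_ge_circle_dist[OF curve] by blast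
  have "compact (g ` {0..1})"
    by (intro compact_continuous_image continuous_on_subset[OF C2_closed_curveD(4)[OF curve]]) auto
  then obtain B where B: "B > 0" "\<And>t. t \<in> {0..1} \<Longrightarrow> norm (g t) \<le> B"
    by (auto dest!: compact_imp_bounded simp: bounded_pos)
  define M where "M = \<bar>ln (2 * B)\<bar> + \<bar>ln c\<bar>"
  have "\<bar>ln (norm (g s - g t))\<bar> \<le> M + periodic_log_sing (s - t)"
    if st: "s \<in> {0..1}" "t \<in> {0..1}" for s t
  proof (cases "g s = g t")
    case True
    then show ?thesis by (simp add: M_def periodic_log_sing_nonneg)
  next
    case False
    define d where "d = min \<bar>s - t\<bar> (1 - \<bar>s - t\<bar>)"
    define x where "x = norm (g s - g t)"
    have "x > 0" using False by (simp add: x_def)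
    have "x \<le> 2 * B"
      using norm_triangle_ineq4[of "g s" "g t"] B(2)[OF st(1)] B(2)[OF st(2)] by (simp add: x_def)
    then have "ln x \<le> ln (2 * B)"
      using \<open>x > 0\<close> by simp
    have "\<not> (s = 0 \<and> t = 1)" "\<not> (s = 1 \<and> t = 0)"
      using False C2_closed_curveD(1)[OF curve, of 0] by auto
    with False st have "d > 0" by (auto simp: d_def)
    then have "ln (c * d) \<le> ln x"
      using chord[OF st] c \<open>x > 0\<close> by (simp add: d_def x_def)
    then have "ln c + ln d \<le> ln x"
      using c \<open>d > 0\<close> by (simp add: ln_mult)
    moreover have "- ln d \<le> periodic_log_sing (s - t)"
      using neg_ln_circle_dist_le[of "s - t"] st \<open>d > 0\<close> by (simp add: d_def)
    ultimately show ?thesis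
      using \<open>ln x \<le> ln (2 * B)\<close> abs_ge_self[of "ln (2 * B)"] abs_ge_minus_self[of "ln c"]
        periodic_log_sing_nonneg[of "s - t"]
      unfolding M_def x_def[symmetric] abs_le_iff by linarith
  qed
  moreover have "M \<ge> 0" by (simp add: M_def)
  ultimately show ?thesis by blast
qed

lemma norm_Gam_chord_le:
  assumes "C2_closed_curve g"
  shows "\<exists>K\<ge>0. \<forall>s\<in>{0..1}. \<forall>t\<in>{0..1}. \<forall>v.
           norm (Gam lam mu (g t - g s) v) \<le> K * (1 + periodic_log_sing (s - t)) * norm v"
proof -
  obtain M where M: "M \<ge> 0"
    and ln_le: "\<And>s t. s \<in> {0..1} \<Longrightarrow> t \<in> {0..1} \<Longrightarrow> \<bar>ln (norm (g s - g t))\<bar> \<le> M + periodic_log_sing (s - t)"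
    using abs_ln_chord_le[OF assms] by blast
  define a1 a2 where "a1 = \<bar>alpha1 lam mu\<bar>" and "a2 = \<bar>alpha2 lam mu\<bar>"
  define K where "K = a1 * (M + 1) + a2"
  have "norm (Gam lam mu (g t - g s) v) \<le> K * (1 + periodic_log_sing (s - t)) * norm v"
    if st: "s \<in> {0..1}" "t \<in> {0..1}" for s t v
  proof -
    define L where "L = periodic_log_sing (s - t)"
    have "0 \<le> L" "0 \<le> a1" "0 \<le> a2" by (simp_all add: L_def a1_def a2_def periodic_log_sing_nonneg)
    have "norm (Gam lam mu (g t - g s) v) \<le> (a1 * \<bar>ln (norm (g s - g t))\<bar> + a2) * norm v"
      using norm_Gam_le[of lam mu "g t - g s" v] by (simp add: a1_def a2_def norm_minus_commute)
    also have "\<dots> \<le> (a1 * (M + L) + a2) * norm v"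
      using ln_le[OF st] \<open>0 \<le> a1\<close> by (intro mult_right_mono add_right_mono mult_left_mono) (simp_all add: L_def)
    also have "\<dots> \<le> K * (1 + L) * norm v"
      using M \<open>0 \<le> L\<close> \<open>0 \<le> a1\<close> \<open>0 \<le> a2\<close>
      by (intro mult_right_mono) (simp_all add: K_def algebra_simps mult_left_mono)
    finally show ?thesis by (simp add: L_def)
  qed
  moreover have "K \<ge> 0" using M by (simp add: K_def a1_def a2_def)
  ultimately show ?thesis by blast
qed

section \<open>Absolute integrability of the single layer kernel\<close>

definition log_majorant :: "real \<Rightarrow> real \<Rightarrow> real" where
  "log_majorant s t = indicator {0..1} s * (indicator {0..1} t + periodic_log_sing (s - t))"

lemma log_majorant_nonneg: "0 \<le> log_majorant s t"
  by (simp add: log_majorant_def periodic_log_sing_nonneg)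

lemma integrable_indicator_01: "integrable lborel (indicator {0..1::real} :: real \<Rightarrow> real)"
  by (simp add: integrable_indicator_iff)

lemma integrable_log_majorant_fst: "integrable lborel (\<lambda>s. log_majorant s t)"
proof -
  have "integrable lborel (\<lambda>s. periodic_log_sing (- t + 1 * s))"
    by (rule lborel_integrable_real_affine[OF integrable_periodic_log_sing]) simp
  then have "integrable lborel (\<lambda>s. indicator {0..1} s * indicator {0..1} t
      + indicator {0..1} s *\<^sub>R periodic_log_sing (s - t))"
    using integrable_indicator_01
    by (intro Bochner_Integration.integrable_add integrable_mult_indicator integrable_mult_left) simp_all
  then show ?thesis by (simp add: log_majorant_def distrib_left)
qed

lemma integrable_log_majorant_snd: "integrable lborel (\<lambda>t. log_majorant s t)"
  and integral_log_majorant_snd: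
    "(\<integral>t. log_majorant s t \<partial>lborel) = indicator {0..1} s * (1 + (\<integral>d. periodic_log_sing d \<partial>lborel))"
proof -
  have shift: "integrable lborel (\<lambda>t. periodic_log_sing (s + (-1) * t))"
    by (rule lborel_integrable_real_affine[OF integrable_periodic_log_sing]) simp
  have "(\<integral>d. periodic_log_sing d \<partial>lborel) = \<bar>-1\<bar> *\<^sub>R (\<integral>t. periodic_log_sing (s + (-1) * t) \<partial>lborel)"
    by (rule lborel_integral_real_affine) simp
  with shift integrable_indicator_01
  show "integrable lborel (\<lambda>t. log_majorant s t)"
    and "(\<integral>t. log_majorant s t \<partial>lborel) = indicator {0..1} s * (1 + (\<integral>d. periodic_log_sing d \<partial>lborel))"
    by (simp_all add: log_majorant_def)
qed

lemma borel_measurable_log_majorant [measurable]: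
  "(\<lambda>(s, t). log_majorant s t) \<in> borel_measurable (lborel \<Otimes>\<^sub>M lborel)"
  unfolding log_majorant_def by measurable

lemma integrable_log_majorant: "integrable (lborel \<Otimes>\<^sub>M lborel) (\<lambda>(s, t). log_majorant s t)"
proof (rule lborel_pair.Fubini_integrable)
  show "AE s in lborel. integrable lborel (\<lambda>t. case_prod log_majorant (s, t))"
    using integrable_log_majorant_snd by simp
  have "integrable lborel (\<lambda>s::real. indicator {0..1} s * (1 + (\<integral>d. periodic_log_sing d \<partial>lborel)))"
    by (intro integrable_mult_left integrable_indicator_01)
  then show "integrable lborel (\<lambda>s. \<integral>t. norm (case_prod log_majorant (s, t)) \<partial>lborel)"
    by (simp add: log_majorant_nonneg integral_log_majorant_snd)
qed measurable

definition curve_pullback :: "(real \<Rightarrow> complex) \<Rightarrow> (complex \<Rightarrow> complex) \<Rightarrow> real \<Rightarrow> complex" where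
  "curve_pullback g a t = indicator {0..1} t *\<^sub>R a (g t)"

lemma continuous_on_comp_curve:
  assumes "C2_closed_curve g" and "continuous_on (path_image g) a"
  shows "continuous_on {0..1} (\<lambda>t. a (g t))"
proof (rule continuous_on_compose2[OF assms(2)])
  show "continuous_on {0..1} g"
    using C2_closed_curveD(4)[OF assms(1)] by (rule continuous_on_subset) simp
qed (simp add: path_image_def)

lemma borel_measurable_curve_pullback:
  assumes "C2_closed_curve g" and "continuous_on (path_image g) a"
  shows "curve_pullback g a \<in> borel_measurable borel"
  unfolding curve_pullback_def
  by (rule borel_measurable_continuous_on_indicator[OF _ continuous_on_comp_curve[OF assms]]) simp

lemma curve_pullback_bounded:
  assumes "C2_closed_curve g" and "continuous_on (path_image g) a"
  shows "\<exists>B\<ge>0. \<forall>t. norm (curve_pullback g a t) \<le> B"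
proof -
  have "bounded ((\<lambda>t. a (g t)) ` {0..1})"
    by (intro compact_imp_bounded compact_continuous_image continuous_on_comp_curve[OF assms]) simp
  then obtain B where "B > 0" "\<And>t. t \<in> {0..1} \<Longrightarrow> norm (a (g t)) \<le> B"
    by (auto simp: bounded_pos)
  then show ?thesis
    by (intro exI[of _ B]) (simp add: curve_pullback_def indicator_def)
qed

lemma speed_bounded:
  assumes "C2_closed_curve g"
  shows "\<exists>S\<ge>0. \<forall>t\<in>{0..1}. speed g t \<le> S"
proof -
  have "bounded (speed g ` {0..1})"
    by (intro compact_imp_bounded compact_continuous_image
        continuous_on_subset[OF C2_closed_curveD(6)[OF assms]]) auto
  then show ?thesis
    by (auto simp: bounded_pos speed_def intro: less_imp_le)
qed

definition single_layer_integrand ::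
    "real \<Rightarrow> real \<Rightarrow> (real \<Rightarrow> complex) \<Rightarrow> (complex \<Rightarrow> complex) \<Rightarrow> real \<Rightarrow> real \<Rightarrow> complex" where
  "single_layer_integrand lam mu g b t s = speed g s *\<^sub>R Gam lam mu (g t - g s) (curve_pullback g b s)"

lemma borel_measurable_single_layer_integrand [measurable (raw)]:
  assumes "C2_closed_curve g" and "continuous_on (path_image g) b"
    and [measurable]: "f \<in> borel_measurable M" "h \<in> borel_measurable M"
  shows "(\<lambda>x. single_layer_integrand lam mu g b (f x) (h x)) \<in> borel_measurable M"
proof -
  note [measurable] = borel_measurable_continuous_onI[OF C2_closed_curveD(4)[OF assms(1)]]
    borel_measurable_continuous_onI[OF C2_closed_curveD(6)[OF assms(1)]]
    borel_measurable_curve_pullback[OF assms(1,2)]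
  show ?thesis unfolding single_layer_integrand_def by measurable
qed

lemma norm_single_layer_integrand_le:
  assumes curve: "C2_closed_curve g" and b: "continuous_on (path_image g) b"
  shows "\<exists>c\<ge>0. \<forall>t\<in>{0..1}. \<forall>s. norm (single_layer_integrand lam mu g b t s) \<le> c * log_majorant s t"
proof -
  obtain K where K: "K \<ge> 0" and Gam_le: "\<And>s t v. s \<in> {0..1} \<Longrightarrow> t \<in> {0..1} \<Longrightarrow>
      norm (Gam lam mu (g t - g s) v) \<le> K * (1 + periodic_log_sing (s - t)) * norm v"
    using norm_Gam_chord_le[OF curve] by blast
  obtain S where S: "S \<ge> 0" "\<And>s. s \<in> {0..1} \<Longrightarrow> speed g s \<le> S"
    using speed_bounded[OF curve] by blast
  obtain B where B: "B \<ge> 0" "\<And>s. norm (curve_pullback g b s) \<le> B"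
    using curve_pullback_bounded[OF curve b] by blast
  have "norm (single_layer_integrand lam mu g b t s) \<le> S * K * B * log_majorant s t"
    if t: "t \<in> {0..1}" for s t
  proof (cases "s \<in> {0..1}")
    case True
    have "norm (single_layer_integrand lam mu g b t s)
        = speed g s * norm (Gam lam mu (g t - g s) (curve_pullback g b s))"
      by (simp add: single_layer_integrand_def)
    also have "\<dots> \<le> S * (K * (1 + periodic_log_sing (s - t)) * B)"
      using Gam_le[OF True t] S B K periodic_log_sing_nonneg[of "s - t"] True
      by (intro mult_mono order_trans[OF _ mult_left_mono[OF B(2)]]) simp_all
    finally show ?thesis
      using True t by (simp add: log_majorant_def mult_ac)
  qed (simp add: single_layer_integrand_def curve_pullback_def log_majorant_nonneg S K B)
  then show ?thesis
    using S K B by (intro exI[of _ "S * K * B"]) simp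
qed

lemma
  assumes curve: "C2_closed_curve g" and b: "continuous_on (path_image g) b" and t: "t \<in> {0..1}"
  shows integrable_single_layer_integrand: "integrable lborel (single_layer_integrand lam mu g b t)"
    and single_layer_eq_integral:
      "single_layer lam mu g b (g t) = (\<integral>s. single_layer_integrand lam mu g b t s \<partial>lborel)"
proof -
  obtain c where "c \<ge> 0"
    and le: "\<And>s. norm (single_layer_integrand lam mu g b t s) \<le> c * log_majorant s t"
    using norm_single_layer_integrand_le[OF curve b] t by blast
  show int: "integrable lborel (single_layer_integrand lam mu g b t)"
  proof (rule Bochner_Integration.integrable_bound)
    show "integrable lborel (\<lambda>s. c * log_majorant s t)"
      by (intro integrable_mult_right integrable_log_majorant_fst)
    show "AE s in lborel. norm (single_layer_integrand lam mu g b t s) \<le> norm (c * log_majorant s t)"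
      using le \<open>c \<ge> 0\<close> by (simp add: log_majorant_nonneg)
  qed (use curve b in measurable)
  have eq: "single_layer_integrand lam mu g b t
      = (\<lambda>s. indicator {0..1} s *\<^sub>R (speed g s *\<^sub>R Gam lam mu (g t - g s) (b (g s))))"
    by (simp add: fun_eq_iff single_layer_integrand_def curve_pullback_def Gam_scaleR)
  have "set_integrable lborel {0..1} (\<lambda>s. speed g s *\<^sub>R Gam lam mu (g t - g s) (b (g s)))"
    using int unfolding set_integrable_def eq .
  from set_borel_integral_eq_integral(2)[OF this]
  show "single_layer lam mu g b (g t) = (\<integral>s. single_layer_integrand lam mu g b t s \<partial>lborel)"
    unfolding single_layer_def eq set_lebesgue_integral_def by (rule sym)
qed

definition single_layer_kernel ::
    "real \<Rightarrow> real \<Rightarrow> (real \<Rightarrow> complex) \<Rightarrow> (complex \<Rightarrow> complex) \<Rightarrow> (complex \<Rightarrow> complex)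
       \<Rightarrow> real \<Rightarrow> real \<Rightarrow> real" where
  "single_layer_kernel lam mu g a b s t =
     speed g t * (curve_pullback g a t \<bullet> single_layer_integrand lam mu g b t s)"

lemma single_layer_kernel_swap:
  "single_layer_kernel lam mu g a b s t = single_layer_kernel lam mu g b a t s"
  unfolding single_layer_kernel_def single_layer_integrand_def
  by (simp add: Gam_minus_commute[of lam mu "g s"] inner_Gam_commute[of "curve_pullback g a t"])

lemma integrable_single_layer_kernel:
  assumes curve: "C2_closed_curve g"
    and a: "continuous_on (path_image g) a" and b: "continuous_on (path_image g) b"
  shows "integrable (lborel \<Otimes>\<^sub>M lborel) (\<lambda>(s, t). single_layer_kernel lam mu g a b s t)"
proof -
  obtain c where "c \<ge> 0" and le: "\<And>t s. t \<in> {0..1} \<Longrightarrow>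
      norm (single_layer_integrand lam mu g b t s) \<le> c * log_majorant s t"
    using norm_single_layer_integrand_le[OF curve b] by blast
  obtain S where S: "S \<ge> 0" "\<And>s. s \<in> {0..1} \<Longrightarrow> speed g s \<le> S"
    using speed_bounded[OF curve] by blast
  obtain B where B: "B \<ge> 0" "\<And>s. norm (curve_pullback g a s) \<le> B"
    using curve_pullback_bounded[OF curve a] by blast
  have "\<bar>single_layer_kernel lam mu g a b s t\<bar> \<le> S * B * c * log_majorant s t" for s t
  proof (cases "t \<in> {0..1}")
    case True
    have "\<bar>single_layer_kernel lam mu g a b s t\<bar>
        \<le> speed g t * (norm (curve_pullback g a t) * norm (single_layer_integrand lam mu g b t s))"
      unfolding single_layer_kernel_def
      by (simp add: abs_mult mult_left_mono Cauchy_Schwarz_ineq2)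
    also have "\<dots> \<le> S * (B * (c * log_majorant s t))"
      using S B le[OF True] \<open>c \<ge> 0\<close> True
      by (intro mult_mono) simp_all
    finally show ?thesis by (simp add: mult_ac)
  qed (simp add: single_layer_kernel_def curve_pullback_def log_majorant_nonneg S B \<open>c \<ge> 0\<close>)
  note [measurable] = borel_measurable_continuous_onI[OF C2_closed_curveD(6)[OF curve]]
    borel_measurable_curve_pullback[OF curve a]
  show ?thesis
  proof (rule Bochner_Integration.integrable_bound)
    show "integrable (lborel \<Otimes>\<^sub>M lborel) (\<lambda>(s, t). S * B * c * log_majorant s t)"
      using integrable_mult_right[OF integrable_log_majorant, of "S * B * c"]
      by (simp add: case_prod_beta')
    show "AE p in lborel \<Otimes>\<^sub>M lborel.
        norm ((\<lambda>(s, t). single_layer_kernel lam mu g a b s t) p)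
        \<le> norm ((\<lambda>(s, t). S * B * c * log_majorant s t) p)"
      using \<open>\<bar>_\<bar> \<le> _\<close> S B \<open>c \<ge> 0\<close> by (auto simp: log_majorant_nonneg)
  qed (unfold single_layer_kernel_def, use curve b in measurable)
qed

section \<open>Symmetry of the single layer pairing\<close>

lemma double_integral_single_layer_kernel_swap:
  assumes "C2_closed_curve g"
    and "continuous_on (path_image g) a" and "continuous_on (path_image g) b"
  shows "(\<integral>t. (\<integral>s. single_layer_kernel lam mu g a b s t \<partial>lborel) \<partial>lborel)
       = (\<integral>t. (\<integral>s. single_layer_kernel lam mu g b a s t \<partial>lborel) \<partial>lborel)"
proof -
  have "(\<integral>t. (\<integral>s. single_layer_kernel lam mu g a b s t \<partial>lborel) \<partial>lborel)
      = (\<integral>s. (\<integral>t. single_layer_kernel lam mu g a b s t \<partial>lborel) \<partial>lborel)"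
    by (rule lborel_pair.Fubini_integral[OF integrable_single_layer_kernel[OF assms, of lam mu]])
  also have "\<dots> = (\<integral>s. (\<integral>t. single_layer_kernel lam mu g b a t s \<partial>lborel) \<partial>lborel)"
    by (simp only: single_layer_kernel_swap[of lam mu g a b])
  finally show ?thesis .
qed

lemma pairing_single_layer_eq_double_integral:
  assumes curve: "C2_closed_curve g"
    and a: "continuous_on (path_image g) a" and b: "continuous_on (path_image g) b"
  shows "integral {0..1} (\<lambda>t. speed g t * (a (g t) \<bullet> single_layer lam mu g b (g t)))
       = (\<integral>t. (\<integral>s. single_layer_kernel lam mu g a b s t \<partial>lborel) \<partial>lborel)"
proof -
  define f where "f = (\<lambda>t. speed g t * (a (g t) \<bullet> single_layer lam mu g b (g t)))"
  have inner: "(\<integral>s. single_layer_kernel lam mu g a b s t \<partial>lborel) = indicator {0..1} t *\<^sub>R f t" for t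
  proof (cases "t \<in> {0..1}")
    case True
    then show ?thesis
      using integrable_single_layer_integrand[OF curve b True, of lam mu]
      by (simp add: single_layer_kernel_def curve_pullback_def f_def
          single_layer_eq_integral[OF curve b True])
  qed (simp add: single_layer_kernel_def curve_pullback_def)
  have "set_integrable lborel {0..1} f"
    using lborel_pair.integrable_snd[OF integrable_single_layer_kernel[OF curve a b, of lam mu]]
    unfolding set_integrable_def inner .
  from set_borel_integral_eq_integral(2)[OF this] show ?thesis
    unfolding set_lebesgue_integral_def inner[symmetric] unfolding f_def by (rule sym)
qed

lemma continuous_on_xi: "continuous_on UNIV (xi k)"
  by (cases "k = 1"; cases "k = 2") (simp_all add: xi_def[abs_def] continuous_intros)

lemma integral_pairing_xi_combination:
  assumes curve: "C2_closed_curve g" and a: "continuous_on (path_image g) a"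
    and dual: "\<And>k. integral {0..1} (\<lambda>s. speed g s * (xi k (g s) \<bullet> a (g s))) = (if k = i then 1 else 0)"
  shows "integral {0..1} (\<lambda>t. speed g t * (a (g t) \<bullet> (\<Sum>k\<in>UNIV. c k *\<^sub>R xi k (g t)))) = c i"
proof -
  have "continuous_on {0..1} (\<lambda>s. speed g s * (xi k (g s) \<bullet> a (g s)))" for k
    using continuous_on_subset[OF C2_closed_curveD(6)[OF curve]]
      continuous_on_compose2[OF continuous_on_xi continuous_on_subset[OF C2_closed_curveD(4)[OF curve]]]
      continuous_on_comp_curve[OF curve a]
    by (intro continuous_intros) auto
  then have int: "(\<lambda>s. speed g s * (xi k (g s) \<bullet> a (g s))) integrable_on {0..1}" for k
    by (rule integrable_continuous_interval)
  have "integral {0..1} (\<lambda>t. speed g t * (a (g t) \<bullet> (\<Sum>k\<in>UNIV. c k *\<^sub>R xi k (g t))))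
      = integral {0..1} (\<lambda>t. \<Sum>k\<in>UNIV. c k * (speed g t * (xi k (g t) \<bullet> a (g t))))"
    by (simp add: inner_sum_right sum_distrib_left inner_commute mult_ac)
  also have "\<dots> = (\<Sum>k\<in>UNIV. c k * integral {0..1} (\<lambda>s. speed g s * (xi k (g s) \<bullet> a (g s))))"
    using int by (subst integral_sum) (auto intro: integrable_on_mult_right)
  also have "\<dots> = (\<Sum>k\<in>UNIV. if k = i then c k else 0)"
    by (rule sum.cong) (simp_all add: dual)
  finally show ?thesis by simp
qed

theorem lemma2p8:
  fixes lam mu :: real and g :: "real \<Rightarrow> complex"
    and zeta :: "3 \<Rightarrow> complex \<Rightarrow> complex" and C :: "real^3^3"
  assumes mu_pos: "mu > 0" and lam_mu: "lam + mu > 0"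
    and curve: "C2_closed_curve g"
    and ker: "\<forall>j. in_kernel lam mu g (zeta j)"
    and indep: "\<forall>c :: 3 \<Rightarrow> real.
                  (\<forall>x\<in>path_image g. (\<Sum>j\<in>UNIV. c j *\<^sub>R zeta j x) = 0) \<longrightarrow> (\<forall>j. c j = 0)"
    and span: "\<forall>phi. in_kernel lam mu g phi \<longrightarrow>
                  (\<exists>c :: 3 \<Rightarrow> real. \<forall>x\<in>path_image g. phi x = (\<Sum>j\<in>UNIV. c j *\<^sub>R zeta j x))"
    and SG: "\<forall>j. \<forall>x\<in>path_image g.
               single_layer lam mu g (zeta j) x = (\<Sum>i\<in>UNIV. (C $ i $ j) *\<^sub>R xi i x)"
    and normalization: "\<forall>i j. integral {0..1} (\<lambda>s. speed g s * (xi i (g s) \<bullet> zeta j (g s)))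
                          = (if i = j then 1 else 0)"
  shows "transpose C = C"
proof -
  have cont: "continuous_on (path_image g) (zeta j)" for j
    using ker by (simp add: in_kernel_def)
  have entry: "C $ i $ j
      = integral {0..1} (\<lambda>t. speed g t * (zeta i (g t) \<bullet> single_layer lam mu g (zeta j) (g t)))" for i j
  proof -
    have "C $ i $ j = integral {0..1} (\<lambda>t. speed g t * (zeta i (g t) \<bullet> (\<Sum>k\<in>UNIV. (C $ k $ j) *\<^sub>R xi k (g t))))"
      using integral_pairing_xi_combination[OF curve cont[of i], where c="\<lambda>k. C $ k $ j"] normalization
      by simp
    also have "\<dots> = integral {0..1} (\<lambda>t. speed g t * (zeta i (g t) \<bullet> single_layer lam mu g (zeta j) (g t)))"
      using SG by (intro integral_cong) (auto simp: path_image_def)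
    finally show ?thesis .
  qed
  have "C $ i $ j = C $ j $ i" for i j
    unfolding entry pairing_single_layer_eq_double_integral[OF curve cont cont]
    by (rule double_integral_single_layer_kernel_swap[OF curve cont cont])
  then show ?thesis
    by (simp add: vec_eq_iff transpose_def)
qed

end
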